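(* For every instance of the CVRPTW with temporal dependencies that has a feasible solution, there exists an optimal feasible solution in which, for every route and every fragment $(v_1,\dots,v_\ell)$ of that route, the start times satisfy $b_{v_i}=\max\{b_{v_{i-1}}+d_{v_{i-1}}+t_{v_{i-1}v_i},\ \alpha_{v_i}\}$ for all $i=2,\dots,\ell-1$ (i.e., every fragment is performed according to a compact schedule).
   Context: Instance data: a task set $V=\{1,\dots,n\}$, a depot $0$, $N=V\cup\{0\}$. For distinct $u,v\in N$ there are a travel time $t_{uv}\ge 0$ and travel cost $c_{uv}\ge0$, both satisfying the triangle inequality. Each $v\in N$ has a duration $d_v\ge 0$, demand $q_v\ge 0$ and a time window $[\alpha_v,\beta_v]$ in which it must start; the depot has $d_0=q_0=0$, $[\alpha_0,\beta_0]=[0,T_{\max}]$. Vehicle capacity is $Q$ and there are $|K|$ vehicles. $D$ is a set of unordered pairs $\{u,v\}$ of distinct tasks, $V_D=\{v\in V:\exists \{u,v\}\in D\}$, and each $\{u,v\}\in D$ carries nonnegative parameters $\delta^{\min}_{uv},\delta^{\max}_{uv},\delta^{\min}_{vu},\delta^{\max}_{vu}$; start times $b_u,b_v$ satisfy the dependency if either $b_u\le b_v$ and $\delta^{\min}_{uv}\le b_v-b_u\le\delta^{\max}_{uv}$, or $b_v\le b_u$ and $\delta^{\min}_{vu}\le b_u-b_v\le\delta^{\max}_{vu}$. A feasible solution consists of at most $|K|$ routes $(0,w_1,\dots,w_m,0)$ such that every task lies in exactly one route, each route has total demand at most $Q$, and there are start times $b_w\in[\alpha_w,\beta_w]$ for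 all tasks with $b_{w_{i+1}}\ge b_{w_i}+d_{w_i}+t_{w_iw_{i+1}}$ along each route (with the depot departure at time $\ge 0$ and return by $T_{\max}$), and all pairs in $D$ satisfying their dependency; its cost is the total travel cost. Optimal means minimum cost. The fragments of a route are its maximal subsequences $(v_1,\dots,v_\ell)$ whose first and last elements are consecutive occurrences (along the route) of nodes from $V_D\cup\{0\}$. *)

theory Defs
  imports Complex_Main
begin

text \<open>An instance of the CVRPTW with temporal dependencies.
  Nodes are natural numbers: the depot is 0, the tasks are 1..n.\<close>

record cvrptw_inst =
  ntasks :: nat
  tt     :: "nat \<Rightarrow> nat \<Rightarrow> real"   \<comment> \<open>travel time t_uv\<close>
  cc     :: "nat \<Rightarrow> nat \<Rightarrow> real"   \<comment> \<open>travel cost c_uv\<close>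
  dur    :: "nat \<Rightarrow> real"
  dem    :: "nat \<Rightarrow> real"
  alpha  :: "nat \<Rightarrow> real"           \<comment> \<open>window start\<close>
  beta   :: "nat \<Rightarrow> real"           \<comment> \<open>window end\<close>
  Tmax   :: real
  cap    :: real
  nveh   :: nat
  Dset   :: "nat set set"
  dmin   :: "nat \<Rightarrow> nat \<Rightarrow> real"
  dmax   :: "nat \<Rightarrow> nat \<Rightarrow> real"

definition tasks :: "cvrptw_inst \<Rightarrow> nat set" where
  "tasks I = {1..ntasks I}"

definition nodes :: "cvrptw_inst \<Rightarrow> nat set" where
  "nodes I = insert 0 (tasks I)"

definition VD :: "cvrptw_inst \<Rightarrow> nat set" where
  "VD I = {v \<in> tasks I. \<exists>u. {u, v} \<in> Dset I}"

definition valid_instance :: "cvrptw_inst \<Rightarrow> bool" where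
  "valid_instance I \<longleftrightarrow>
     (\<forall>u\<in>nodes I. \<forall>v\<in>nodes I. u \<noteq> v \<longrightarrow> tt I u v \<ge> 0 \<and> cc I u v \<ge> 0) \<and>
     (\<forall>u\<in>nodes I. \<forall>v\<in>nodes I. \<forall>w\<in>nodes I. u \<noteq> v \<and> v \<noteq> w \<and> u \<noteq> w \<longrightarrow>
         tt I u w \<le> tt I u v + tt I v w \<and> cc I u w \<le> cc I u v + cc I v w) \<and>
     (\<forall>v\<in>nodes I. dur I v \<ge> 0 \<and> dem I v \<ge> 0) \<and>
     dur I 0 = 0 \<and> dem I 0 = 0 \<and> alpha I 0 = 0 \<and> beta I 0 = Tmax I \<and>
     (\<forall>p\<in>Dset I. \<exists>u v. p = {u, v} \<and> u \<noteq> v \<and> u \<in> tasks I \<and> v \<in> tasks I \<and>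
         dmin I u v \<ge> 0 \<and> dmax I u v \<ge> 0 \<and> dmin I v u \<ge> 0 \<and> dmax I v u \<ge> 0)"

definition dep_ok :: "cvrptw_inst \<Rightarrow> (nat \<Rightarrow> real) \<Rightarrow> nat \<Rightarrow> nat \<Rightarrow> bool" where
  "dep_ok I b u v \<longleftrightarrow>
     (b u \<le> b v \<and> dmin I u v \<le> b v - b u \<and> b v - b u \<le> dmax I u v) \<or>
     (b v \<le> b u \<and> dmin I v u \<le> b u - b v \<and> b u - b v \<le> dmax I v u)"

text \<open>A route is given by its task list ws = [w_1,...,w_m]; the full node
  sequence is (0, w_1, ..., w_m, 0).\<close>
definition route_seq :: "nat list \<Rightarrow> nat list" where
  "route_seq ws = 0 # ws @ [0]"

text \<open>Start time at position k (0 \<le> k \<le> m) of the route sequence: position 0 is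
  the depot departure time s0, position k \<ge> 1 is the start time of w_k.\<close>
definition pos_time :: "(nat \<Rightarrow> real) \<Rightarrow> real \<Rightarrow> nat list \<Rightarrow> nat \<Rightarrow> real" where
  "pos_time b s0 ws k = (if k = 0 then s0 else b (ws ! (k - 1)))"

text \<open>A solution: list of routes R (task lists), task start times b, and
  depot departure time s r for route number r.\<close>
definition feasible ::
  "cvrptw_inst \<Rightarrow> nat list list \<Rightarrow> (nat \<Rightarrow> real) \<Rightarrow> (nat \<Rightarrow> real) \<Rightarrow> bool" where
  "feasible I R b s \<longleftrightarrow>
     length R \<le> nveh I \<and>
     (\<forall>ws\<in>set R. ws \<noteq> []) \<and>
     distinct (concat R) \<and> set (concat R) = tasks I \<and>
     (\<forall>ws\<in>set R. sum_list (map (dem I) ws) \<le> cap I) \<and>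
     (\<forall>v\<in>tasks I. alpha I v \<le> b v \<and> b v \<le> beta I v) \<and>
     (\<forall>r<length R. let ws = R ! r in
         0 \<le> s r \<and> s r \<le> Tmax I \<and>
         s r + dur I 0 + tt I 0 (hd ws) \<le> b (hd ws) \<and>
         (\<forall>i. Suc i < length ws \<longrightarrow>
              b (ws ! i) + dur I (ws ! i) + tt I (ws ! i) (ws ! Suc i) \<le> b (ws ! Suc i)) \<and>
         b (last ws) + dur I (last ws) + tt I (last ws) 0 \<le> Tmax I) \<and>
     (\<forall>u v. {u, v} \<in> Dset I \<longrightarrow> u \<noteq> v \<longrightarrow> dep_ok I b u v)"

definition route_cost :: "cvrptw_inst \<Rightarrow> nat list \<Rightarrow> real" where
  "route_cost I ws = (let p = route_seq ws in
     \<Sum>k<length ws + 1. cc I (p ! k) (p ! Suc k))"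

definition total_cost :: "cvrptw_inst \<Rightarrow> nat list list \<Rightarrow> real" where
  "total_cost I R = sum_list (map (route_cost I) R)"

definition optimal ::
  "cvrptw_inst \<Rightarrow> nat list list \<Rightarrow> (nat \<Rightarrow> real) \<Rightarrow> (nat \<Rightarrow> real) \<Rightarrow> bool" where
  "optimal I R b s \<longleftrightarrow> feasible I R b s \<and>
     (\<forall>R' b' s'. feasible I R' b' s' \<longrightarrow> total_cost I R \<le> total_cost I R')"

text \<open>Fragment: positions i < j of the route sequence holding consecutive
  occurrences of nodes from VD \<union> {0}; the fragment is (p!i, ..., p!j).\<close>
definition is_fragment :: "cvrptw_inst \<Rightarrow> nat list \<Rightarrow> nat \<Rightarrow> nat \<Rightarrow> bool" where
  "is_fragment I ws i j \<longleftrightarrow> (let p = route_seq ws in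
     i < j \<and> j < length p \<and>
     p ! i \<in> insert 0 (VD I) \<and> p ! j \<in> insert 0 (VD I) \<and>
     (\<forall>k. i < k \<and> k < j \<longrightarrow> p ! k \<notin> insert 0 (VD I)))"

definition compact_fragment ::
  "cvrptw_inst \<Rightarrow> (nat \<Rightarrow> real) \<Rightarrow> real \<Rightarrow> nat list \<Rightarrow> nat \<Rightarrow> nat \<Rightarrow> bool" where
  "compact_fragment I b s0 ws i j \<longleftrightarrow> (let p = route_seq ws in
     \<forall>k. i < k \<and> k < j \<longrightarrow>
       pos_time b s0 ws k =
         max (pos_time b s0 ws (k - 1) + dur I (p ! (k - 1)) + tt I (p ! (k - 1)) (p ! k))
             (alpha I (p ! k)))"

end

theory Submission
  imports Defs
begin

text \<open>Optimality only constrains the routes, and there are finitely many route lists, so an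
  optimal solution exists. Along each of its routes recompute the start times forwards: a task
  of \<open>V_D\<close> keeps its start time, every other task starts at
  \<open>max (previous start + duration + travel time) (window start)\<close>. By induction along the
  route the new start times are never later than the old ones, so time windows, travel times and
  the return to the depot are still respected, and the dependencies are untouched because no
  task of \<open>V_D\<close> moves. The inner tasks of a fragment are not in \<open>V_D\<close>, so every
  fragment is now scheduled compactly.\<close>

lemma in_set_concat_conv_nth:
  "v \<in> set (concat xss) \<longleftrightarrow> (\<exists>r < length xss. \<exists>k < length (xss ! r). xss ! r ! k = v)"
  by (fastforce simp: in_set_conv_nth)

lemma nth_nth_in_set_concat:
  "r < length xss \<Longrightarrow> k < length (xss ! r) \<Longrightarrow> xss ! r ! k \<in> set (concat xss)"
  unfolding in_set_concat_conv_nth by blast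

lemma distinct_concat_nth_unique:
  assumes "distinct (concat xss)"
    and "r < length xss" "k < length (xss ! r)"
    and "r' < length xss" "k' < length (xss ! r')"
    and "xss ! r ! k = xss ! r' ! k'"
  shows "r = r' \<and> k = k'"
  using assms
proof (induction xss arbitrary: r r')
  case Nil
  then show ?case by simp
next
  case (Cons xs xss)
  have disjoint: "set xs \<inter> set (concat xss) = {}"
    using Cons.prems(1) by simp
  show ?case
  proof (cases r; cases r')
    fix q assume "r = 0" "r' = Suc q"
    then have "k < length xs" "xs ! k = xss ! q ! k'" "xss ! q ! k' \<in> set (concat xss)"
      using Cons.prems(2-6) nth_nth_in_set_concat[of q xss k'] by simp_all
    with disjoint show ?thesis by (metis disjoint_iff nth_mem)
  next
    fix q assume "r = Suc q" "r' = 0"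
    then have "k' < length xs" "xs ! k' = xss ! q ! k" "xss ! q ! k \<in> set (concat xss)"
      using Cons.prems(2-6) nth_nth_in_set_concat[of q xss k] by simp_all
    with disjoint show ?thesis by (metis disjoint_iff nth_mem)
  qed (use Cons in \<open>auto simp: nth_eq_iff_index_eq\<close>)
qed

lemma ex_fun_on_concat_positions:
  assumes "distinct (concat xss)"
  shows "\<exists>g. (\<forall>r < length xss. \<forall>k < length (xss ! r). g (xss ! r ! k) = f r k) \<and>
    (\<forall>v. v \<notin> set (concat xss) \<longrightarrow> g v = h v)"
proof -
  define pos where "pos v = (SOME (r, k). r < length xss \<and> k < length (xss ! r) \<and> xss ! r ! k = v)" for v
  define g where "g v = (if v \<in> set (concat xss) then case_prod f (pos v) else h v)" for v
  have "g (xss ! r ! k) = f r k" if "r < length xss" "k < length (xss ! r)" for r k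
  proof -
    have "pos (xss ! r ! k) = (r, k)"
      unfolding pos_def
    proof (rule some_equality)
      show "\<And>rk. (case rk of (r', k') \<Rightarrow> r' < length xss \<and> k' < length (xss ! r') \<and> xss ! r' ! k' = xss ! r ! k)
        \<Longrightarrow> rk = (r, k)"
        using distinct_concat_nth_unique[OF assms _ _ that] by auto
    qed (use that in auto)
    then show ?thesis
      using nth_nth_in_set_concat[OF that] by (simp add: g_def)
  qed
  moreover have "g v = h v" if "v \<notin> set (concat xss)" for v
    using that by (simp add: g_def)
  ultimately show ?thesis
    by blast
qed

lemma route_seq_nth_0 [simp]: "route_seq ws ! 0 = 0"
  by (simp add: route_seq_def)

lemma route_seq_nth_Suc [simp]: "k < length ws \<Longrightarrow> route_seq ws ! Suc k = ws ! k"
  by (simp add: route_seq_def nth_append)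

lemma pos_time_0 [simp]: "pos_time b s0 ws 0 = s0"
  and pos_time_Suc [simp]: "pos_time b s0 ws (Suc k) = b (ws ! k)"
  by (simp_all add: pos_time_def)

definition timed_route :: "cvrptw_inst \<Rightarrow> (nat \<Rightarrow> real) \<Rightarrow> real \<Rightarrow> nat list \<Rightarrow> bool" where
  "timed_route I b s0 ws \<longleftrightarrow> (\<forall>k < length ws.
     pos_time b s0 ws k + dur I (route_seq ws ! k) + tt I (route_seq ws ! k) (route_seq ws ! Suc k)
       \<le> pos_time b s0 ws (Suc k))"

lemma timed_route_iff:
  assumes "ws \<noteq> []"
  shows "timed_route I b s0 ws \<longleftrightarrow>
    s0 + dur I 0 + tt I 0 (hd ws) \<le> b (hd ws) \<and>
    (\<forall>i. Suc i < length ws \<longrightarrow> b (ws ! i) + dur I (ws ! i) + tt I (ws ! i) (ws ! Suc i) \<le> b (ws ! Suc i))"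
proof -
  obtain n where n: "length ws = Suc n"
    using assms by (cases ws) auto
  show ?thesis
    unfolding timed_route_def n All_less_Suc2
    using assms n by (simp add: hd_conv_nth)
qed

text \<open>Indexed like \<^const>\<open>pos_time\<close>: position \<open>0\<close> is the depot departure and
  position \<open>Suc k\<close> is the task \<open>ws ! k\<close>.\<close>

primrec compact_time :: "cvrptw_inst \<Rightarrow> (nat \<Rightarrow> real) \<Rightarrow> real \<Rightarrow> nat list \<Rightarrow> nat \<Rightarrow> real" where
  "compact_time I b s0 ws 0 = s0"
| "compact_time I b s0 ws (Suc k) =
     (if ws ! k \<in> VD I then b (ws ! k)
      else max (compact_time I b s0 ws k + dur I (route_seq ws ! k) + tt I (route_seq ws ! k) (ws ! k))
               (alpha I (ws ! k)))"

context
  fixes I b s0 ws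
  assumes timed: "timed_route I b s0 ws"
    and windows: "\<And>w. w \<in> set ws \<Longrightarrow> alpha I w \<le> b w"
begin

lemma timed_route_nth:
  "k < length ws \<Longrightarrow>
    pos_time b s0 ws k + dur I (route_seq ws ! k) + tt I (route_seq ws ! k) (ws ! k) \<le> b (ws ! k)"
  using timed by (simp add: timed_route_def)

lemma compact_time_le_pos_time: "k \<le> length ws \<Longrightarrow> compact_time I b s0 ws k \<le> pos_time b s0 ws k"
proof (induction k)
  case (Suc k)
  then show ?case
    using timed_route_nth[of k] windows[OF nth_mem, of k] by auto
qed simp

lemma compact_time_travel:
  "k < length ws \<Longrightarrow>
    compact_time I b s0 ws k + dur I (route_seq ws ! k) + tt I (route_seq ws ! k) (route_seq ws ! Suc k)
      \<le> compact_time I b s0 ws (Suc k)"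
  using compact_time_le_pos_time[of k] timed_route_nth[of k] by auto

lemma alpha_le_compact_time: "k < length ws \<Longrightarrow> alpha I (ws ! k) \<le> compact_time I b s0 ws (Suc k)"
  using windows[OF nth_mem, of k] by auto

end

lemma pos_time_eq_compact_time:
  assumes "\<And>k. k < length ws \<Longrightarrow> b' (ws ! k) = compact_time I b s0 ws (Suc k)"
    and "k \<le> length ws"
  shows "pos_time b' s0 ws k = compact_time I b s0 ws k"
  using assms by (cases k) auto

lemma timed_route_compact_time:
  assumes "timed_route I b s0 ws" "\<And>w. w \<in> set ws \<Longrightarrow> alpha I w \<le> b w"
    and "\<And>k. k < length ws \<Longrightarrow> b' (ws ! k) = compact_time I b s0 ws (Suc k)"
  shows "timed_route I b' s0 ws"
  unfolding timed_route_def
  using compact_time_travel[OF assms(1,2)] pos_time_eq_compact_time[OF assms(3)] assms(3) by simp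

lemma compact_fragment_compact_time:
  assumes "\<And>k. k < length ws \<Longrightarrow> b' (ws ! k) = compact_time I b s0 ws (Suc k)"
    and "is_fragment I ws i j"
  shows "compact_fragment I b' s0 ws i j"
  unfolding compact_fragment_def Let_def
proof (intro allI impI)
  fix k assume k: "i < k \<and> k < j"
  have "j < length (route_seq ws)" and inner: "route_seq ws ! k \<notin> insert 0 (VD I)"
    using assms(2) k unfolding is_fragment_def Let_def by auto
  then obtain q where q: "k = Suc q" "q < length ws"
    using k by (cases k) (auto simp: route_seq_def)
  with inner have not_VD: "ws ! q \<notin> VD I"
    by simp
  show "pos_time b' s0 ws k = max (pos_time b' s0 ws (k - 1) + dur I (route_seq ws ! (k - 1))
      + tt I (route_seq ws ! (k - 1)) (route_seq ws ! k)) (alpha I (route_seq ws ! k))"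
    using pos_time_eq_compact_time[OF assms(1)] assms(1) q not_VD by simp
qed

lemma feasible_timed_route:
  assumes "feasible I R b s" "r < length R"
  shows "timed_route I b (s r) (R ! r)"
proof -
  have "R ! r \<noteq> []"
    using assms by (simp add: feasible_def)
  with assms show ?thesis
    unfolding feasible_def Let_def timed_route_iff[OF \<open>R ! r \<noteq> []\<close>] by blast
qed

lemma feasible_earlier_schedule:
  assumes feasible: "feasible I R b s"
    and earlier: "\<And>v. b' v \<le> b v"
    and windows: "\<And>v. v \<in> tasks I \<Longrightarrow> alpha I v \<le> b' v"
    and timed: "\<And>r. r < length R \<Longrightarrow> timed_route I b' (s r) (R ! r)"
    and fixed: "\<And>v. v \<in> VD I \<or> v \<notin> tasks I \<Longrightarrow> b' v = b v"
  shows "feasible I R b' s"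
proof -
  have "dep_ok I b' u v" if "{u, v} \<in> Dset I" "u \<noteq> v" for u v
  proof -
    have "u \<in> VD I \<or> u \<notin> tasks I" "v \<in> VD I \<or> v \<notin> tasks I"
      using that unfolding VD_def by (auto simp: insert_commute)
    then have "b' u = b u" "b' v = b v"
      using fixed by auto
    moreover have "dep_ok I b u v"
      using feasible that by (simp add: feasible_def)
    ultimately show ?thesis
      by (simp add: dep_ok_def)
  qed
  moreover have "s r + dur I 0 + tt I 0 (hd (R ! r)) \<le> b' (hd (R ! r)) \<and>
      (\<forall>i. Suc i < length (R ! r) \<longrightarrow>
        b' (R ! r ! i) + dur I (R ! r ! i) + tt I (R ! r ! i) (R ! r ! Suc i) \<le> b' (R ! r ! Suc i)) \<and>
      b' (last (R ! r)) + dur I (last (R ! r)) + tt I (last (R ! r)) 0 \<le> Tmax I"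
    if "r < length R" for r
  proof -
    have "R ! r \<noteq> []"
      using feasible that by (simp add: feasible_def)
    moreover have "b (last (R ! r)) + dur I (last (R ! r)) + tt I (last (R ! r)) 0 \<le> Tmax I"
      using feasible that by (simp add: feasible_def Let_def)
    ultimately show ?thesis
      using timed[OF that] earlier[of "last (R ! r)"] timed_route_iff by fastforce
  qed
  moreover have "alpha I v \<le> b' v \<and> b' v \<le> beta I v" if "v \<in> tasks I" for v
    using feasible that windows earlier[of v] by (fastforce simp: feasible_def)
  ultimately show ?thesis
    using feasible by (simp add: feasible_def Let_def)
qed

lemma compact_rescheduling:
  assumes feasible: "feasible I R b s"
  shows "\<exists>b'. feasible I R b' s \<and>
    (\<forall>r < length R. \<forall>i j. is_fragment I (R ! r) i j \<longrightarrow> compact_fragment I b' (s r) (R ! r) i j)"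
proof -
  have distinct: "distinct (concat R)" and covers: "set (concat R) = tasks I"
    using feasible by (simp_all add: feasible_def)
  obtain b' where at_pos: "\<And>r k. r < length R \<Longrightarrow> k < length (R ! r) \<Longrightarrow>
      b' (R ! r ! k) = compact_time I b (s r) (R ! r) (Suc k)"
    and outside: "\<And>v. v \<notin> set (concat R) \<Longrightarrow> b' v = b v"
    using ex_fun_on_concat_positions[OF distinct,
        of "\<lambda>r k. compact_time I b (s r) (R ! r) (Suc k)" b] by blast
  have timed: "timed_route I b (s r) (R ! r)" if "r < length R" for r
    using feasible that by (rule feasible_timed_route)
  have windows: "alpha I w \<le> b w" if "r < length R" "w \<in> set (R ! r)" for r w
    using feasible that covers by (fastforce simp: feasible_def)
  have moved: "b' v \<le> b v \<and> alpha I v \<le> b' v \<and> (v \<in> VD I \<longrightarrow> b' v = b v)"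
    if v_in: "v \<in> set (concat R)" for v
  proof -
    obtain r k where rk: "r < length R" "k < length (R ! r)" and v: "v = R ! r ! k"
      using v_in[unfolded in_set_concat_conv_nth] by blast
    show ?thesis
      using compact_time_le_pos_time[OF timed[OF rk(1)] windows[OF rk(1)], of "Suc k"]
        alpha_le_compact_time[OF timed[OF rk(1)] windows[OF rk(1)] rk(2)] at_pos[OF rk] rk
      unfolding v by simp
  qed
  have earlier: "b' v \<le> b v" for v
    using moved outside by (cases "v \<in> set (concat R)") auto
  have alpha_le: "alpha I v \<le> b' v" if "v \<in> tasks I" for v
    using moved that covers by blast
  have fixed: "b' v = b v" if "v \<in> VD I \<or> v \<notin> tasks I" for v
    using moved outside that covers by blast
  have "feasible I R b' s"
  proof (rule feasible_earlier_schedule[OF feasible])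
    show "timed_route I b' (s r) (R ! r)" if "r < length R" for r
      using timed[OF that] windows[OF that] at_pos[OF that] by (rule timed_route_compact_time)
  qed (fact earlier alpha_le fixed)+
  moreover have "compact_fragment I b' (s r) (R ! r) i j"
    if "r < length R" "is_fragment I (R ! r) i j" for r i j
    using at_pos[OF that(1)] that(2) by (rule compact_fragment_compact_time)
  ultimately show ?thesis
    by blast
qed

lemma finite_feasible_routes: "finite {R. \<exists>b s. feasible I R b s}"
proof (rule finite_subset)
  let ?routes = "{ws. set ws \<subseteq> tasks I \<and> length ws \<le> card (tasks I)}"
  show "{R. \<exists>b s. feasible I R b s} \<subseteq> {R. set R \<subseteq> ?routes \<and> length R \<le> nveh I}"
  proof
    fix R assume "R \<in> {R. \<exists>b s. feasible I R b s}"
    then obtain b s where feasible: "feasible I R b s"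
      by blast
    have "ws \<in> ?routes" if ws: "ws \<in> set R" for ws
    proof -
      have "set ws \<subseteq> tasks I" "distinct ws"
        using feasible ws by (auto simp: feasible_def distinct_concat_iff)
      moreover from this have "length ws \<le> card (tasks I)"
        by (metis card_mono distinct_card finite_atLeastAtMost tasks_def)
      ultimately show ?thesis
        by simp
    qed
    with feasible show "R \<in> {R. set R \<subseteq> ?routes \<and> length R \<le> nveh I}"
      by (auto simp: feasible_def)
  qed
  show "finite {R. set R \<subseteq> ?routes \<and> length R \<le> nveh I}"
    by (intro finite_lists_length_le) (simp add: tasks_def)
qed

lemma ex_optimal:
  assumes "\<exists>R b s. feasible I R b s"
  shows "\<exists>R b s. optimal I R b s"
proof -
  obtain R where "is_arg_min (total_cost I) (\<lambda>R. R \<in> {R. \<exists>b s. feasible I R b s}) R"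
    using ex_is_arg_min_if_finite[OF finite_feasible_routes] assms by blast
  then show ?thesis
    unfolding is_arg_min_linorder optimal_def by blast
qed

lemma optimal_reschedule: "optimal I R b s \<Longrightarrow> feasible I R b' s' \<Longrightarrow> optimal I R b' s'"
  by (simp add: optimal_def)

theorem mainTheorem3:
  assumes "valid_instance I"
    and "\<exists>R b s. feasible I R b s"
  shows "\<exists>R b s. optimal I R b s \<and>
           (\<forall>r < length R. \<forall>i j. is_fragment I (R ! r) i j \<longrightarrow>
               compact_fragment I b (s r) (R ! r) i j)"
proof -
  obtain R b s where optimal: "optimal I R b s"
    using ex_optimal[OF assms(2)] by blast
  then have "feasible I R b s"
    by (simp add: optimal_def)
  then obtain b' where "feasible I R b' s"
    and "\<forall>r < length R. \<forall>i j. is_fragment I (R ! r) i j \<longrightarrow> compact_fragment I b' (s r) (R ! r) i j"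
    using compact_rescheduling by blast
  with optimal show ?thesis
    by (blast intro: optimal_reschedule)
qed

end
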